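(* Let $\{(F_j,d_j)\}_{j\ge 1}$ be a countable collection of metric spaces with labelled presentations $\mathcal F^j$ (with common alphabet $\{1,\dots,m\}$, $m\ge 2$) as described in the context. If $\mathcal F=\bigcup_{j\ge1}\mathcal F^j$ is a modular chaotic structure for $F=\bigcup_{j\ge1}F_j$, then the map $\varPhi$ is modular chaotic in the sense of Devaney, i.e. the modular similarity map $\varphi$ is modular-transitive, its modular-periodic points are modular-dense, and it is modular-sensitive.
   Context: Setting. Let $(F_j,d_j)$, $j=1,2,\ldots$, be metric spaces and $m\ge 2$ a natural number. For each $j$ there is a presentation $\mathcal F^j=\{\mathcal F^j_{i_1i_2\ldots i_n\ldots}: i_k\in\{1,\dots,m\},\ k=1,2,\ldots\}$: every infinite sequence $i_1i_2\ldots$ over $\{1,\dots,m\}$ labels an element of $F_j$, and every element of $F_j$ has at least one such label (labels need not be unique). Put $\delta_j(\mathcal F^j_{i_1i_2\ldots},\mathcal F^j_{j_1j_2\ldots})=d_j(f_1,f_2)$ when the two labels correspond to $f_1,f_2\in F_j$ (so different labels of the same point have $\delta_j=0$); write $\delta$ for $\delta_j$ on $\mathcal F^j$. For fixed $i_1,\dots,i_n$ let $\mathcal F^j_{i_1\ldots i_n}=\bigcup_{j_k\in\{1,\dots,m\}}\mathcal F^j_{i_1\ldots i_nj_1j_2\ldots}$. For $A,B\subseteq\mathcal F^j$: $\mathrm{diam}(A)=\sup\{\delta_j(x,y):x,y\in A\}$, $\delta_j(A,B)=\inf\{\delta_j(x,y):x\in A,y\in B\}$. Diameter condition for $j$: $\max_{i_1\ldots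 i_n}\mathrm{diam}(\mathcal F^j_{i_1\ldots i_n})\to0$ as $n\to\infty$. Separation condition for $j$: there exist $\varepsilon_0^j>0$ and a natural $n=n(j)$ such that for any indices $i_1\ldots i_n$ there exist indices $j_1\ldots j_n$ with $\delta_j(\mathcal F^j_{i_1\ldots i_n},\mathcal F^j_{j_1\ldots j_n})\ge\varepsilon_0^j$. $\mathcal F=\bigcup_j\mathcal F^j$ is a modular chaotic structure for $F=\bigcup_jF_j$ if the diameter condition holds for every $j$, the separation condition holds for every $j$, and $\varepsilon_0=\inf_j\varepsilon_0^j>0$. Maps. The modular similarity map $\varphi$ on $\mathcal F$ is given by $\varphi(\mathcal F^j_{i_1i_2i_3\ldots})=\mathcal F^{j+1}_{i_2i_3\ldots}$, $j\ge1$. The (multivalued) map $\varPhi:F\to F$ sends $f\in F_j$ to the set of all points of $F_{j+1}$ labelled by $\varphi(\mathcal F^j_{i_1i_2\ldots})$ where $i_1i_2\ldots$ ranges over all labels of $f$. $\varPhi$ is called modular chaotic in a given sense if $\varphi$ is. Neighborhoods. $\mathcal F^j_{i_1i_2\ldots}$ is in the $(k,l)$-neighborhood of $\mathcal F^p_{s_1s_2\ldots}$ ($j<p$) if $j+k=p$ and $i_{k+1}=s_1,\dots,i_{k+l}=s_l$. A point $\mathcal F^j_{i_1i_2\ldots}$ is periodic with period $p$ if its lower index is an endless repetition of a block of $p$ terms (modular-periodic). Modular-transitivity: there is a lower index $i_1i_2\ldots$ such that for any sequence $s_1s_2\ldots$ and naturals $j,l$ there exist positive integers $m'$ and $k>j$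 such that $\mathcal F^j_{i_1i_2\ldots}$ is in the $(m',l)$-neighborhood of $\mathcal F^k_{s_1s_2\ldots}$. Modular-density of periodic points: for any point $\mathcal F^k_{s_1s_2\ldots}$ and naturals $l$ and $m'\le k$ there is a periodic point $\mathcal F^{m'}_{i_1i_2\ldots}$ in the $(k-m',l)$-neighborhood of $\mathcal F^k_{s_1s_2\ldots}$. Modular-sensitivity: there is $\varepsilon_0>0$ such that for each $x=\mathcal F^j_{i_1i_2\ldots}$ and each $\kappa>0$ there exist $y=\mathcal F^j_{j_1j_2\ldots}$ and a natural $k$ with $\delta(x,y)<\kappa$ and $\delta(\varphi^k(x),\varphi^k(y))>\varepsilon_0$. Modular Devaney chaos: $\varphi$ is modular-transitive, modular-sensitive, and its modular-periodic points are modular-dense. *)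

theory Defs
  imports "HOL-Analysis.Analysis"
begin

text \<open>Lower indices i_1 i_2 ... are sequences s :: nat => nat with s 0 = i_1, s 1 = i_2, ...
  over the alphabet {1..m}.  A presentation of F_j is P j :: (nat => nat) => 'a,
  sending a label to the point of F_j it labels.\<close>

definition labels :: "nat \<Rightarrow> (nat \<Rightarrow> nat) set" where
  "labels m = {s. \<forall>k. s k \<in> {1..m}}"

definition words :: "nat \<Rightarrow> nat \<Rightarrow> nat list set" where
  "words m n = {w. length w = n \<and> set w \<subseteq> {1..m}}"

text \<open>s extends the finite index i_1...i_n, i.e. F_s belongs to F_{i_1...i_n}.\<close>
definition extends :: "nat list \<Rightarrow> (nat \<Rightarrow> nat) \<Rightarrow> bool" where
  "extends w s \<longleftrightarrow> (\<forall>r<length w. s r = w ! r)"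

definition presentation :: "nat \<Rightarrow> 'a set \<Rightarrow> ((nat \<Rightarrow> nat) \<Rightarrow> 'a) \<Rightarrow> bool" where
  "presentation m Fj Pj \<longleftrightarrow> Pj ` labels m = Fj"

definition delta :: "(nat \<Rightarrow> 'a \<Rightarrow> 'a \<Rightarrow> real) \<Rightarrow> (nat \<Rightarrow> (nat \<Rightarrow> nat) \<Rightarrow> 'a)
    \<Rightarrow> nat \<Rightarrow> (nat \<Rightarrow> nat) \<Rightarrow> (nat \<Rightarrow> nat) \<Rightarrow> real" where
  "delta d P j s t = d j (P j s) (P j t)"

text \<open>Diameter condition: max over words of length n of diam(F^j_w) tends to 0
  (diam being the supremum of delta_j over pairs in the cylinder).\<close>
definition diameter_cond :: "nat \<Rightarrow> (nat \<Rightarrow> 'a \<Rightarrow> 'a \<Rightarrow> real) \<Rightarrow> (nat \<Rightarrow> (nat \<Rightarrow> nat) \<Rightarrow> 'a)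
    \<Rightarrow> nat \<Rightarrow> bool" where
  "diameter_cond m d P j \<longleftrightarrow>
     (\<forall>\<epsilon>>0. \<exists>N. \<forall>n\<ge>N. \<forall>w\<in>words m n. \<forall>s\<in>labels m. \<forall>t\<in>labels m.
        extends w s \<longrightarrow> extends w t \<longrightarrow> delta d P j s t \<le> \<epsilon>)"

definition separation_cond :: "nat \<Rightarrow> (nat \<Rightarrow> 'a \<Rightarrow> 'a \<Rightarrow> real) \<Rightarrow> (nat \<Rightarrow> (nat \<Rightarrow> nat) \<Rightarrow> 'a)
    \<Rightarrow> nat \<Rightarrow> real \<Rightarrow> bool" where
  "separation_cond m d P j e \<longleftrightarrow>
     (\<exists>n. \<forall>w\<in>words m n. \<exists>w'\<in>words m n. \<forall>s\<in>labels m. \<forall>t\<in>labels m.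
        extends w s \<longrightarrow> extends w' t \<longrightarrow> delta d P j s t \<ge> e)"

definition modular_chaotic_structure :: "nat \<Rightarrow> (nat \<Rightarrow> 'a \<Rightarrow> 'a \<Rightarrow> real)
    \<Rightarrow> (nat \<Rightarrow> (nat \<Rightarrow> nat) \<Rightarrow> 'a) \<Rightarrow> bool" where
  "modular_chaotic_structure m d P \<longleftrightarrow>
     (\<forall>j\<ge>1. diameter_cond m d P j) \<and>
     (\<exists>eps :: nat \<Rightarrow> real. (\<forall>j\<ge>1. eps j > 0 \<and> separation_cond m d P j (eps j)) \<and>
        (INF j\<in>{1..}. eps j) > 0 \<and> bdd_below (eps ` {1..}))"

definition phi :: "nat \<times> (nat \<Rightarrow> nat) \<Rightarrow> nat \<times> (nat \<Rightarrow> nat)" where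
  "phi x = (fst x + 1, \<lambda>k. snd x (Suc k))"

definition in_nbhd :: "nat \<times> (nat \<Rightarrow> nat) \<Rightarrow> nat \<Rightarrow> nat \<Rightarrow> nat \<times> (nat \<Rightarrow> nat) \<Rightarrow> bool" where
  "in_nbhd x k l y \<longleftrightarrow> fst x + k = fst y \<and> (\<forall>r<l. snd x (k + r) = snd y r)"

definition modular_periodic :: "(nat \<Rightarrow> nat) \<Rightarrow> bool" where
  "modular_periodic s \<longleftrightarrow> (\<exists>p>0. \<forall>n. s (n + p) = s n)"

definition modular_transitive :: "nat \<Rightarrow> bool" where
  "modular_transitive m \<longleftrightarrow>
     (\<exists>i\<in>labels m. \<forall>s\<in>labels m. \<forall>j\<ge>1. \<forall>l\<ge>1.
        \<exists>m'>0. \<exists>k>j. in_nbhd (j, i) m' l (k, s))"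

definition modular_dense_periodic :: "nat \<Rightarrow> bool" where
  "modular_dense_periodic m \<longleftrightarrow>
     (\<forall>k\<ge>1. \<forall>s\<in>labels m. \<forall>l\<ge>1. \<forall>m'. 1 \<le> m' \<and> m' \<le> k \<longrightarrow>
        (\<exists>i\<in>labels m. modular_periodic i \<and> in_nbhd (m', i) (k - m') l (k, s)))"

definition modular_sensitive :: "nat \<Rightarrow> (nat \<Rightarrow> 'a \<Rightarrow> 'a \<Rightarrow> real)
    \<Rightarrow> (nat \<Rightarrow> (nat \<Rightarrow> nat) \<Rightarrow> 'a) \<Rightarrow> bool" where
  "modular_sensitive m d P \<longleftrightarrow>
     (\<exists>\<epsilon>0>0. \<forall>j\<ge>1. \<forall>s\<in>labels m. \<forall>\<kappa>>0. \<exists>t\<in>labels m. \<exists>k.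
        delta d P j s t < \<kappa> \<and>
        delta d P (fst ((phi ^^ k) (j, s))) (snd ((phi ^^ k) (j, s))) (snd ((phi ^^ k) (j, t))) > \<epsilon>0)"

definition modular_devaney_chaotic :: "nat \<Rightarrow> (nat \<Rightarrow> 'a \<Rightarrow> 'a \<Rightarrow> real)
    \<Rightarrow> (nat \<Rightarrow> (nat \<Rightarrow> nat) \<Rightarrow> 'a) \<Rightarrow> bool" where
  "modular_devaney_chaotic m d P \<longleftrightarrow>
     modular_transitive m \<and> modular_dense_periodic m \<and> modular_sensitive m d P"

end

theory Submission
  imports Defs
begin

text \<open>Transitivity and density of periodic points are purely combinatorial: a label that
  contains every finite word over \<open>{1..m}\<close> at a positive position has a shift landing in
  every cylinder, and repeating a prescribed prefix gives a periodic label in any cylinder.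
  Sensitivity uses the metric structure only through the two conditions: a label \<open>t\<close> that
  agrees with \<open>s\<close> on a long prefix is \<open>\<kappa>\<close>-close to \<open>s\<close> by the diameter condition at level
  \<open>j\<close>, and continuing that prefix by a word separated from the corresponding cylinder at level
  \<open>j + N\<close> makes the \<open>N\<close>-th images at least \<open>\<epsilon>\<^sub>0\<close> apart.\<close>

lemma funpow_phi: "(phi ^^ k) (j, s) = (j + k, \<lambda>r. s (r + k))"
  by (induction k) (auto simp: phi_def)

lemma shift_in_labels: "s \<in> labels m \<Longrightarrow> (\<lambda>r. s (r + k)) \<in> labels m"
  by (simp add: labels_def)

lemma prefix_in_words: "s \<in> labels m \<Longrightarrow> map s [0..<n] \<in> words m n"
  by (auto simp: labels_def words_def)

lemma extends_prefix: "extends (map s [0..<n]) s"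
  by (simp add: extends_def)

definition concat_blocks :: "(nat \<Rightarrow> 'b list) \<Rightarrow> nat \<Rightarrow> 'b" where
  "concat_blocks ws k = concat (map ws [0..<Suc k]) ! k"

lemma length_concat_blocks_ge:
  assumes "\<And>n. ws n \<noteq> []"
  shows "n \<le> length (concat (map ws [0..<n]))"
proof (induction n)
  case (Suc n)
  have "length (ws n) > 0" using assms[of n] by simp
  with Suc.IH show ?case by (simp del: length_greater_0_conv)
qed simp

lemma concat_blocks_nth:
  assumes nonempty: "\<And>n. ws n \<noteq> []" and k: "k < length (concat (map ws [0..<n]))"
  shows "concat_blocks ws k = concat (map ws [0..<n]) ! k"
proof -
  have prefix_nth: "concat (map ws [0..<b]) ! k = concat (map ws [0..<a]) ! k"
    if "a \<le> b" and "k < length (concat (map ws [0..<a]))" for a b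
  proof -
    have "[0..<b] = [0..<a] @ [a..<b]"
      using upt_add_eq_append[of 0 a "b - a"] that(1) by simp
    then show ?thesis using that(2) by (simp add: nth_append)
  qed
  have "k < length (concat (map ws [0..<Suc k]))"
    using length_concat_blocks_ge[of ws "Suc k", OF nonempty] by simp
  then show ?thesis
    unfolding concat_blocks_def using prefix_nth[of n "Suc k"] prefix_nth[of "Suc k" n] k
    by (cases "n \<le> Suc k") simp_all
qed

lemma concat_blocks_block:
  assumes "\<And>n. ws n \<noteq> []" and "r < length (ws n)"
  shows "concat_blocks ws (length (concat (map ws [0..<n])) + r) = ws n ! r"
  using concat_blocks_nth[OF assms(1), where n = "Suc n"] assms(2) by (simp add: nth_append)

text \<open>Block \<open>n\<close> is the \<open>n\<close>-th list of naturals, if it is a word over \<open>{1..m}\<close>, behind the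
  letter \<open>1\<close>; the extra letter keeps every block nonempty and every occurrence at a positive
  position.\<close>
definition universal_block :: "nat \<Rightarrow> nat \<Rightarrow> nat list" where
  "universal_block m n = 1 # (if set (from_nat n) \<subseteq> {1..m} then from_nat n else [])"

definition universal_label :: "nat \<Rightarrow> nat \<Rightarrow> nat" where
  "universal_label m = concat_blocks (universal_block m)"

lemma universal_block_nonempty: "universal_block m n \<noteq> []"
  by (simp add: universal_block_def)

lemma universal_label_in_labels:
  assumes "m \<ge> 1"
  shows "universal_label m \<in> labels m"
  unfolding labels_def
proof (intro CollectI allI)
  fix k
  let ?prefix = "concat (map (universal_block m) [0..<Suc k])"
  have "set ?prefix \<subseteq> {1..m}"
    using assms by (auto simp: universal_block_def)
  moreover have "k < length ?prefix"
    using length_concat_blocks_ge[where ws = "universal_block m" and n = "Suc k",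
        OF universal_block_nonempty]
    by simp
  ultimately show "universal_label m k \<in> {1..m}"
    unfolding universal_label_def concat_blocks_def by (meson nth_mem subsetD)
qed

lemma universal_label_contains_word:
  assumes "set w \<subseteq> {1..m}"
  shows "\<exists>p>0. \<forall>r<length w. universal_label m (p + r) = w ! r"
proof -
  define p where "p = length (concat (map (universal_block m) [0..<to_nat w]))"
  have block: "universal_block m (to_nat w) = 1 # w"
    using assms by (simp add: universal_block_def)
  have "universal_label m (Suc p + r) = w ! r" if "r < length w" for r
    using concat_blocks_block[where ws = "universal_block m" and r = "Suc r" and n = "to_nat w",
        OF universal_block_nonempty] that
    unfolding universal_label_def p_def block by simp
  then show ?thesis by blast
qed

lemma modular_transitive:
  assumes "m \<ge> 1"
  shows "modular_transitive m"
  unfolding modular_transitive_def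
proof (intro bexI[of _ "universal_label m"] ballI allI impI)
  fix s j l assume s: "s \<in> labels m"
  obtain p where "p > 0" and "\<forall>r<l. universal_label m (p + r) = s r"
    using universal_label_contains_word[of "map s [0..<l]" m] prefix_in_words[OF s]
    by (auto simp: words_def)
  then show "\<exists>m'>0. \<exists>k>j. in_nbhd (j, universal_label m) m' l (k, s)"
    by (auto simp: in_nbhd_def)
qed (rule universal_label_in_labels[OF assms])

lemma periodic_label_in_cylinder:
  assumes "m \<ge> 1" and "s \<in> labels m" and "l \<ge> 1"
  shows "\<exists>i\<in>labels m. modular_periodic i \<and> (\<forall>r<l. i (q + r) = s r)"
proof -
  define i where "i n = (let x = n mod (q + l) in if x < q then 1 else s (x - q))" for n
  have "i \<in> labels m"
    using assms(1,2) by (auto simp: labels_def i_def Let_def)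
  moreover have "modular_periodic i"
    unfolding modular_periodic_def using assms(3) by (intro exI[of _ "q + l"]) (simp add: i_def)
  moreover have "\<forall>r<l. i (q + r) = s r"
    by (simp add: i_def Let_def)
  ultimately show ?thesis by blast
qed

lemma modular_dense_periodic:
  assumes "m \<ge> 1"
  shows "modular_dense_periodic m"
  unfolding modular_dense_periodic_def
proof (intro allI impI ballI)
  fix k l m' :: nat and s assume "s \<in> labels m" "1 \<le> l" "1 \<le> m' \<and> m' \<le> k"
  then show "\<exists>i\<in>labels m. modular_periodic i \<and> in_nbhd (m', i) (k - m') l (k, s)"
    using periodic_label_in_cylinder[OF assms, of s l "k - m'"] by (auto simp: in_nbhd_def)
qed

lemma diameter_cond_agreeing_prefix:
  assumes "diameter_cond m d P j" and "\<kappa> > 0"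
  obtains N where "\<And>s t. s \<in> labels m \<Longrightarrow> t \<in> labels m \<Longrightarrow> \<forall>r<N. t r = s r
    \<Longrightarrow> delta d P j s t \<le> \<kappa>"
proof -
  obtain N where N: "\<forall>w\<in>words m N. \<forall>s\<in>labels m. \<forall>t\<in>labels m.
      extends w s \<longrightarrow> extends w t \<longrightarrow> delta d P j s t \<le> \<kappa>"
    using assms unfolding diameter_cond_def by blast
  have "delta d P j s t \<le> \<kappa>" if "s \<in> labels m" "t \<in> labels m" "\<forall>r<N. t r = s r" for s t
  proof -
    have "extends (map s [0..<N]) t" using that(3) by (simp add: extends_def)
    then show ?thesis using N prefix_in_words[OF that(1)] that(1,2) extends_prefix by blast
  qed
  then show thesis by (rule that)
qed

lemma separation_cond_far_word:
  assumes "separation_cond m d P j e" and "s \<in> labels m"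
  obtains w where "set w \<subseteq> {1..m}"
    and "\<And>t. t \<in> labels m \<Longrightarrow> extends w t \<Longrightarrow> delta d P j s t \<ge> e"
proof -
  obtain n where n: "\<forall>w\<in>words m n. \<exists>w'\<in>words m n. \<forall>s\<in>labels m. \<forall>t\<in>labels m.
      extends w s \<longrightarrow> extends w' t \<longrightarrow> delta d P j s t \<ge> e"
    using assms(1) unfolding separation_cond_def by blast
  then obtain w where "w \<in> words m n"
    and "\<forall>t\<in>labels m. extends w t \<longrightarrow> delta d P j s t \<ge> e"
    using prefix_in_words[OF assms(2)] extends_prefix[of s n] assms(2) by blast
  then show thesis using that by (auto simp: words_def)
qed

definition splice :: "nat \<Rightarrow> nat list \<Rightarrow> (nat \<Rightarrow> nat) \<Rightarrow> nat \<Rightarrow> nat" where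
  "splice N w s r = (if N \<le> r \<and> r - N < length w then w ! (r - N) else s r)"

lemma splice_in_labels: "s \<in> labels m \<Longrightarrow> set w \<subseteq> {1..m} \<Longrightarrow> splice N w s \<in> labels m"
  unfolding labels_def splice_def by (auto intro: subsetD nth_mem)

lemma modular_sensitive:
  assumes "modular_chaotic_structure m d P"
  shows "modular_sensitive m d P"
proof -
  from assms obtain eps where
    diam: "\<And>j. j \<ge> 1 \<Longrightarrow> diameter_cond m d P j" and
    sep: "\<And>j. j \<ge> 1 \<Longrightarrow> separation_cond m d P j (eps j)" and
    inf_pos: "(INF j\<in>{1..}. eps j) > 0" and bdd: "bdd_below (eps ` {1..})"
    unfolding modular_chaotic_structure_def by blast
  define \<epsilon>\<^sub>0 where "\<epsilon>\<^sub>0 = (INF j\<in>{1..}. eps j) / 2"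
  have eps_gt: "eps j > \<epsilon>\<^sub>0" if "j \<ge> 1" for j
    using cINF_lower[OF bdd, of j] that inf_pos by (simp add: \<epsilon>\<^sub>0_def)
  show ?thesis unfolding modular_sensitive_def
  proof (intro exI[of _ \<epsilon>\<^sub>0] conjI allI impI ballI)
    show "\<epsilon>\<^sub>0 > 0" using inf_pos by (simp add: \<epsilon>\<^sub>0_def)
    fix j :: nat and s and \<kappa> :: real assume j: "1 \<le> j" and s: "s \<in> labels m" and "\<kappa> > 0"
    then obtain N where close: "\<And>s t. s \<in> labels m \<Longrightarrow> t \<in> labels m \<Longrightarrow> \<forall>r<N. t r = s r
        \<Longrightarrow> delta d P j s t \<le> \<kappa> / 2"
      using diameter_cond_agreeing_prefix[OF diam[OF j], of "\<kappa> / 2"] by auto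
    have "separation_cond m d P (j + N) (eps (j + N))" using sep j by simp
    then obtain w where w: "set w \<subseteq> {1..m}"
      and far: "\<And>t. t \<in> labels m \<Longrightarrow> extends w t
        \<Longrightarrow> delta d P (j + N) (\<lambda>r. s (r + N)) t \<ge> eps (j + N)"
      using separation_cond_far_word[OF _ shift_in_labels[OF s]] by blast
    let ?t = "splice N w s"
    have t: "?t \<in> labels m" using splice_in_labels[OF s w] .
    have "extends w (\<lambda>r. ?t (r + N))"
      by (simp add: extends_def splice_def)
    then have "delta d P (j + N) (\<lambda>r. s (r + N)) (\<lambda>r. ?t (r + N)) > \<epsilon>\<^sub>0"
      using far[OF shift_in_labels[OF t]] eps_gt[of "j + N"] j by fastforce
    moreover have "delta d P j s ?t < \<kappa>"
      using close[OF s t] \<open>\<kappa> > 0\<close> by (simp add: splice_def)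
    ultimately show "\<exists>t\<in>labels m. \<exists>k. delta d P j s t < \<kappa> \<and> \<epsilon>\<^sub>0 <
        delta d P (fst ((phi ^^ k) (j, s))) (snd ((phi ^^ k) (j, s))) (snd ((phi ^^ k) (j, t)))"
      using t by (intro bexI[of _ ?t] exI[of _ N]) (simp add: funpow_phi)
  qed
qed

theorem theorem1:
  fixes m :: nat
    and F :: "nat \<Rightarrow> 'a set"
    and d :: "nat \<Rightarrow> 'a \<Rightarrow> 'a \<Rightarrow> real"
    and P :: "nat \<Rightarrow> (nat \<Rightarrow> nat) \<Rightarrow> 'a"
  assumes "m \<ge> 2"
    and "\<And>j. j \<ge> 1 \<Longrightarrow> Metric_space (F j) (d j)"
    and "\<And>j. j \<ge> 1 \<Longrightarrow> presentation m (F j) (P j)"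
    and "modular_chaotic_structure m d P"
  shows "modular_devaney_chaotic m d P"
proof -
  have "m \<ge> 1" using assms(1) by simp
  then show ?thesis
    unfolding modular_devaney_chaotic_def
    using modular_transitive modular_dense_periodic modular_sensitive[OF assms(4)] by blast
qed

end
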